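(* Let $m\ge 2$, $n\ge1$, $\varepsilon\in[0,1/2)$, $\delta\ge 0$. Suppose the $m$ datasets $\{x_{1i}\}_{i=1}^n,\dots,\{x_{mi}\}_{i=1}^n$ are statistically independent and there exists $\boldsymbol\theta^\star\in\mathbb{R}^m$ and $S\subseteq[m]$ with $|S^c|/m\le\varepsilon$ and $\min_{\theta\in\mathbb{R}}\max_{j\in S}|\theta^\star_j-\theta|\le\delta$, such that for each $j\in[m]$, $\{x_{ji}\}_{i=1}^n$ are i.i.d. $N(\theta^\star_j,1)$. Let $f_j(\theta)=\frac1{2n}\sum_{i=1}^n(x_{ji}-\theta)^2$ and let $(\widehat\theta_1,\dots,\widehat\theta_m,\widehat\theta)$ be any minimizer of $\sum_{j=1}^m[f_j(\theta_j)+\lambda|\theta_j-\theta|]$ over $\theta_1,\dots,\theta_m,\theta\in\mathbb{R}$. Choose any $t\ge1$, $c\in[\varepsilon,1/2)$ and $$\lambda=\frac{5}{1-2c}\sqrt{\frac{2(\log m+t)}{n}}.$$ Then there exists a universal constant $C>0$ such that with probability at least $1-e^{-t}$, $$\max_{j\in S}|\widehat\theta_j-\theta^\star_j|<\frac{C}{(1-2c)^2}\Big(\sqrt{\frac{t}{mn}}+\min\Big\{\delta,\sqrt{\frac{\log m+t}{n}}\Big\}+\varepsilon\sqrt{\frac{\log m+t}{n}}\Big),$$ $$\max_{j\in S^c}|\widehat\theta_j-\theta^\star_j|<\frac{C}{(1-2c)^2}\sqrt{\frac{\log m+t}{n}}.$$ *)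

theory Defs
  imports "HOL-Probability.Probability"
begin

text \<open>Data: x :: nat \<times> nat \<Rightarrow> real, where x (j,i) is the i-th sample of dataset j,
  j \<in> {1..m}, i \<in> {1..n}.\<close>

definition data_measure :: "nat \<Rightarrow> nat \<Rightarrow> (nat \<Rightarrow> real) \<Rightarrow> (nat \<times> nat \<Rightarrow> real) measure" where
  "data_measure m n theta_star =
     PiM ({1..m} \<times> {1..n})
         (\<lambda>(j,i). density lborel (\<lambda>y. ennreal (normal_density (theta_star j) 1 y)))"

definition loss_fj :: "nat \<Rightarrow> (nat \<times> nat \<Rightarrow> real) \<Rightarrow> nat \<Rightarrow> real \<Rightarrow> real" where
  "loss_fj n x j th = (1 / (2 * real n)) * (\<Sum>i=1..n. (x (j,i) - th)\<^sup>2)"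

definition objective :: "nat \<Rightarrow> nat \<Rightarrow> real \<Rightarrow> (nat \<times> nat \<Rightarrow> real) \<Rightarrow> (nat \<Rightarrow> real) \<Rightarrow> real \<Rightarrow> real" where
  "objective m n lam x ths th = (\<Sum>j=1..m. loss_fj n x j (ths j) + lam * \<bar>ths j - th\<bar>)"

definition is_minimizer :: "nat \<Rightarrow> nat \<Rightarrow> real \<Rightarrow> (nat \<times> nat \<Rightarrow> real) \<Rightarrow> (nat \<Rightarrow> real) \<Rightarrow> real \<Rightarrow> bool" where
  "is_minimizer m n lam x ths th \<longleftrightarrow>
     (\<forall>ths' th'. objective m n lam x ths th \<le> objective m n lam x ths' th')"

end

theory Submission
  imports Defs
begin

(* Every coordinate of a minimizer is its sample mean soft-thresholded towards the centre theta, and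
   moving theta together with all inlier coordinates shows that the inlier residuals sum to at most
   lam q in absolute value (p inliers, q outliers). If every sample mean is within s of its target and
   2 delta + 2 s + lam q / p <= lam, this pins theta near the inliers; then every inlier estimate equals
   theta, which lies within lam q / p + u + 2 delta of each inlier target, u being the error of the
   averaged inlier sample means. Every estimate is within lam + s of its target in any case. Gaussian
   Chernoff bounds and a union bound give s of order sqrt ((log m + t) / n) and u of order
   sqrt (t / (m n)) with probability at least 1 - exp (- t). With the prescribed lam the condition
   on lam holds as soon as delta is at most sqrt ((log m + t) / n); for larger delta the bound lam + s
   already has the required order. *)

section \<open>Gaussian tail bounds on product measures\<close>

definition normal_product_measure :: "'i set \<Rightarrow> ('i \<Rightarrow> real) \<Rightarrow> ('i \<Rightarrow> real) measure" where
  "normal_product_measure I \<mu> = PiM I (\<lambda>k. density lborel (\<lambda>y. ennreal (normal_density (\<mu> k) 1 y)))"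

lemma prob_space_normal_product_measure: "prob_space (normal_product_measure I \<mu>)"
  unfolding normal_product_measure_def
  by (intro prob_space_PiM prob_space_normal_density) simp

lemma data_measure_eq_normal_product_measure:
  "data_measure m n \<theta> = normal_product_measure ({1..m} \<times> {1..n}) (\<theta> \<circ> fst)"
  unfolding data_measure_def normal_product_measure_def
  by (intro PiM_cong refl) (auto simp: case_prod_beta)

lemma normal_density_mult_exp:
  "normal_density \<mu> 1 y * exp (c * (y - \<mu>)) = exp (c\<^sup>2 / 2) * normal_density (\<mu> + c) 1 y"
proof -
  have "-(y - \<mu>)\<^sup>2 / 2 + c * (y - \<mu>) = c\<^sup>2 / 2 + -(y - (\<mu> + c))\<^sup>2 / 2"
    by (simp add: power2_eq_square field_simps)
  then show ?thesis
    unfolding normal_density_def by (simp add: mult_ac flip: exp_add)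
qed

lemma nn_integral_exp_normal:
  "(\<integral>\<^sup>+ y. ennreal (exp (c * (y - \<mu>))) \<partial>density lborel (\<lambda>y. ennreal (normal_density \<mu> 1 y)))
     = ennreal (exp (c\<^sup>2 / 2))"
proof -
  have "(\<integral>\<^sup>+ y. ennreal (exp (c * (y - \<mu>))) \<partial>density lborel (\<lambda>y. ennreal (normal_density \<mu> 1 y)))
      = (\<integral>\<^sup>+ y. ennreal (exp (c\<^sup>2 / 2)) * ennreal (normal_density (\<mu> + c) 1 y) \<partial>lborel)"
    by (subst nn_integral_density) (auto simp: normal_density_mult_exp simp flip: ennreal_mult)
  also have "\<dots> = ennreal (exp (c\<^sup>2 / 2)) * (\<integral>\<^sup>+ y. ennreal (normal_density (\<mu> + c) 1 y) \<partial>lborel)"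
    by (subst nn_integral_cmult) auto
  also have "(\<integral>\<^sup>+ y. ennreal (normal_density (\<mu> + c) 1 y) \<partial>lborel) = 1"
    by (subst nn_integral_eq_integral) auto
  finally show ?thesis by simp
qed

lemma borel_measurable_normal_product_linear:
  assumes "J \<subseteq> I"
  shows "(\<lambda>x. \<Sum>k\<in>J. a k * (x k - \<mu> k)) \<in> borel_measurable (normal_product_measure I \<nu>)"
proof (intro borel_measurable_sum borel_measurable_times borel_measurable_const borel_measurable_diff)
  fix k assume "k \<in> J"
  with assms have "k \<in> I" by blast
  then show "(\<lambda>x. x k) \<in> borel_measurable (normal_product_measure I \<nu>)"
    unfolding normal_product_measure_def
    using measurable_component_singleton[of k I] by simp
qed

lemma nn_integral_normal_product_exp_linear:
  assumes "finite I"
  shows "(\<integral>\<^sup>+ x. ennreal (exp (\<Sum>k\<in>I. a k * (x k - \<mu> k))) \<partial>normal_product_measure I \<mu>)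
     = ennreal (exp (\<Sum>k\<in>I. (a k)\<^sup>2 / 2))"
proof -
  let ?M = "\<lambda>k. density lborel (\<lambda>y. ennreal (normal_density (\<mu> k) 1 y))"
  interpret product_sigma_finite ?M
    unfolding product_sigma_finite_def
    by (simp add: prob_space_imp_sigma_finite prob_space_normal_density)
  have "(\<integral>\<^sup>+ x. ennreal (exp (\<Sum>k\<in>I. a k * (x k - \<mu> k))) \<partial>normal_product_measure I \<mu>)
      = (\<integral>\<^sup>+ x. (\<Prod>k\<in>I. ennreal (exp (a k * (x k - \<mu> k)))) \<partial>PiM I ?M)"
    using assms by (simp add: normal_product_measure_def exp_sum prod_ennreal)
  also have "\<dots> = (\<Prod>k\<in>I. ennreal (exp ((a k)\<^sup>2 / 2)))"
    using assms by (subst product_nn_integral_prod) (auto simp: nn_integral_exp_normal)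
  finally show ?thesis
    using assms by (simp add: exp_sum prod_ennreal)
qed

lemma prob_normal_product_linear_ge:
  fixes \<mu> :: "'i \<Rightarrow> real"
  assumes I: "finite I" and b: "b > 0" and V: "(\<Sum>k\<in>I. (a k)\<^sup>2) > 0"
  defines "N \<equiv> normal_product_measure I \<mu>"
  shows "measure N {x \<in> space N. b \<le> (\<Sum>k\<in>I. a k * (x k - \<mu> k))}
           \<le> exp (- b\<^sup>2 / (2 * (\<Sum>k\<in>I. (a k)\<^sup>2)))"
proof -
  interpret prob_space N unfolding N_def by (rule prob_space_normal_product_measure)
  define V where "V = (\<Sum>k\<in>I. (a k)\<^sup>2)"
  define s where "s = b / V"
  define f where "f x = (\<Sum>k\<in>I. a k * (x k - \<mu> k))" for x
  have s: "s > 0" using b V by (simp add: s_def V_def)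
  have [measurable]: "f \<in> borel_measurable N"
    unfolding f_def N_def by (rule borel_measurable_normal_product_linear) simp
  have "emeasure N {x \<in> space N. b \<le> f x}
      \<le> ennreal (exp (- s * b)) * (\<integral>\<^sup>+ x. ennreal (exp (s * f x)) * indicator (space N) x \<partial>N)"
    by (rule Chernoff_ineq_nn_integral_ge) (use s in auto)
  also have "(\<integral>\<^sup>+ x. ennreal (exp (s * f x)) * indicator (space N) x \<partial>N)
      = (\<integral>\<^sup>+ x. ennreal (exp (\<Sum>k\<in>I. (s * a k) * (x k - \<mu> k))) \<partial>N)"
    by (intro nn_integral_cong) (simp add: f_def sum_distrib_left mult.assoc)
  also have "\<dots> = ennreal (exp (s\<^sup>2 * V / 2))"
    unfolding N_def using I
    by (simp add: nn_integral_normal_product_exp_linear power_mult_distrib V_def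
        sum_distrib_left sum_divide_distrib)
  finally have "emeasure N {x \<in> space N. b \<le> f x} \<le> ennreal (exp (- s * b) * exp (s\<^sup>2 * V / 2))"
    by (simp add: ennreal_mult)
  also have "exp (- s * b) * exp (s\<^sup>2 * V / 2) = exp (- b\<^sup>2 / (2 * V))"
    using V by (simp add: s_def V_def power2_eq_square field_simps flip: exp_add)
  finally show ?thesis
    by (simp add: emeasure_eq_measure f_def V_def)
qed

lemma prob_normal_product_sum_deviation_ge:
  fixes \<mu> :: "'i \<Rightarrow> real"
  assumes I: "finite I" and J: "J \<subseteq> I" "J \<noteq> {}" and b: "b > 0"
  defines "N \<equiv> normal_product_measure I \<mu>"
  shows "measure N {x \<in> space N. b \<le> \<bar>\<Sum>k\<in>J. x k - \<mu> k\<bar>} \<le> 2 * exp (- b\<^sup>2 / (2 * real (card J)))"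
proof -
  interpret prob_space N unfolding N_def by (rule prob_space_normal_product_measure)
  define E where "E \<sigma> = {x \<in> space N. b \<le> \<sigma> * (\<Sum>k\<in>J. x k - \<mu> k)}" for \<sigma> :: real
  have finJ: "finite J" using I J finite_subset by blast
  have E_sets: "E \<sigma> \<in> sets N" for \<sigma>
  proof -
    have [measurable]: "(\<lambda>x. \<Sum>k\<in>J. \<sigma> * (x k - \<mu> k)) \<in> borel_measurable N"
      unfolding N_def by (rule borel_measurable_normal_product_linear[OF J(1)])
    show ?thesis unfolding E_def by (simp add: sum_distrib_left) measurable
  qed
  have E_prob: "measure N (E \<sigma>) \<le> exp (- b\<^sup>2 / (2 * real (card J)))" if "\<sigma>\<^sup>2 = 1" for \<sigma>
  proof -
    define a where "a k = (if k \<in> J then \<sigma> else 0)" for k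
    have "(\<Sum>k\<in>I. a k * (x k - \<mu> k)) = \<sigma> * (\<Sum>k\<in>J. x k - \<mu> k)" for x
    proof -
      have "(\<Sum>k\<in>I. a k * (x k - \<mu> k)) = (\<Sum>k\<in>J. a k * (x k - \<mu> k))"
        using I J by (intro sum.mono_neutral_right) (auto simp: a_def)
      then show ?thesis by (simp add: a_def sum_distrib_left)
    qed
    moreover have "(\<Sum>k\<in>I. (a k)\<^sup>2) = card J"
    proof -
      have "(\<Sum>k\<in>I. (a k)\<^sup>2) = (\<Sum>k\<in>J. (a k)\<^sup>2)"
        using I J by (intro sum.mono_neutral_right) (auto simp: a_def)
      then show ?thesis using that by (simp add: a_def)
    qed
    ultimately show ?thesis
      using prob_normal_product_linear_ge[OF I b, of a \<mu>] J finJ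
      by (simp add: E_def N_def card_gt_0_iff)
  qed
  have "{x \<in> space N. b \<le> \<bar>\<Sum>k\<in>J. x k - \<mu> k\<bar>} = E 1 \<union> E (-1)"
    by (auto simp: E_def abs_if)
  moreover have "measure N (E 1 \<union> E (-1)) \<le> measure N (E 1) + measure N (E (-1))"
    by (rule measure_Un_le) (simp_all add: E_sets)
  ultimately show ?thesis
    using E_prob[of 1] E_prob[of "-1"] by simp
qed

section \<open>Concentration of the sample means\<close>

definition sample_mean :: "nat \<Rightarrow> (nat \<times> nat \<Rightarrow> real) \<Rightarrow> nat \<Rightarrow> real" where
  "sample_mean n x j = (\<Sum>i=1..n. x (j,i)) / real n"

lemma sum_block_deviation_eq_sample_means:
  assumes "n \<ge> 1"
  shows "(\<Sum>k\<in>S \<times> {1..n}. x k - (\<theta> \<circ> fst) k) = real n * (\<Sum>j\<in>S. sample_mean n x j - \<theta> j)"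
proof -
  have "(\<Sum>i=1..n. x (j,i) - \<theta> j) = real n * (sample_mean n x j - \<theta> j)" for j
    using assms by (simp add: sample_mean_def sum_subtractf algebra_simps)
  then have "(\<Sum>k\<in>S \<times> {1..n}. x k - (\<theta> \<circ> fst) k) = (\<Sum>j\<in>S. real n * (sample_mean n x j - \<theta> j))"
    by (simp add: sum.cartesian_product')
  then show ?thesis
    by (simp add: sum_distrib_left)
qed

lemma prob_data_measure_sample_means_deviation_ge:
  fixes \<theta> :: "nat \<Rightarrow> real" and b :: real
  assumes n: "n \<ge> 1" and T: "T \<subseteq> {1..m}" "T \<noteq> {}" and b: "b > 0"
  defines "M \<equiv> data_measure m n \<theta>"
  shows "{x \<in> space M. b \<le> \<bar>\<Sum>j\<in>T. sample_mean n x j - \<theta> j\<bar>} \<in> sets M"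
    and "measure M {x \<in> space M. b \<le> \<bar>\<Sum>j\<in>T. sample_mean n x j - \<theta> j\<bar>}
           \<le> 2 * exp (- real n * b\<^sup>2 / (2 * real (card T)))"
proof -
  define I where "I = {1..m} \<times> {1..n}"
  have MN: "M = normal_product_measure I (\<theta> \<circ> fst)"
    unfolding M_def I_def by (rule data_measure_eq_normal_product_measure)
  have I: "finite I" and TI: "T \<times> {1..n} \<subseteq> I" "T \<times> {1..n} \<noteq> {}"
    using T n by (auto simp: I_def)
  have E: "{x \<in> space M. b \<le> \<bar>\<Sum>j\<in>T. sample_mean n x j - \<theta> j\<bar>}
      = {x \<in> space M. real n * b \<le> \<bar>\<Sum>k\<in>T \<times> {1..n}. x k - (\<theta> \<circ> fst) k\<bar>}"
    unfolding sum_block_deviation_eq_sample_means[OF n] using n by (simp add: abs_mult)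
  have [measurable]: "(\<lambda>x. \<Sum>k\<in>T \<times> {1..n}. x k - (\<theta> \<circ> fst) k)
      \<in> borel_measurable (normal_product_measure I (\<theta> \<circ> fst))"
    using borel_measurable_normal_product_linear[OF TI(1), of "\<lambda>_. 1"] by simp
  show "{x \<in> space M. b \<le> \<bar>\<Sum>j\<in>T. sample_mean n x j - \<theta> j\<bar>} \<in> sets M"
    unfolding E unfolding MN by measurable
  show "measure M {x \<in> space M. b \<le> \<bar>\<Sum>j\<in>T. sample_mean n x j - \<theta> j\<bar>}
      \<le> 2 * exp (- real n * b\<^sup>2 / (2 * real (card T)))"
    using prob_normal_product_sum_deviation_ge[OF I TI, of "real n * b" "\<theta> \<circ> fst"] b n
    unfolding E unfolding MN by (simp add: card_cartesian_product power_mult_distrib power2_eq_square field_simps)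
qed

lemma data_measure_sample_means_concentrate:
  fixes \<theta> :: "nat \<Rightarrow> real" and s u :: real
  assumes n: "n \<ge> 1" and S: "S \<subseteq> {1..m}" "S \<noteq> {}" and s: "s > 0" and u: "u > 0"
  defines "M \<equiv> data_measure m n \<theta>"
  shows "\<exists>A\<in>sets M.
           1 - (2 * real m * exp (- real n * s\<^sup>2 / 2) + 2 * exp (- real n * real (card S) * u\<^sup>2 / 2))
             \<le> measure M A \<and>
           (\<forall>x\<in>A. (\<forall>j\<in>{1..m}. \<bar>sample_mean n x j - \<theta> j\<bar> < s) \<and>
                   \<bar>\<Sum>j\<in>S. sample_mean n x j - \<theta> j\<bar> < real (card S) * u)"
proof -
  interpret prob_space M
    unfolding M_def data_measure_eq_normal_product_measure by (rule prob_space_normal_product_measure)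
  define D where "D T b = {x \<in> space M. b \<le> \<bar>\<Sum>j\<in>T. sample_mean n x j - \<theta> j\<bar>}" for T b
  have D: "D T b \<in> sets M" "measure M (D T b) \<le> 2 * exp (- real n * b\<^sup>2 / (2 * real (card T)))"
    if "T \<subseteq> {1..m}" "T \<noteq> {}" "b > 0" for T b
    using prob_data_measure_sample_means_deviation_ge[OF n that, of \<theta>] by (simp_all add: D_def M_def)
  define R where "R = (\<Union>j\<in>{1..m}. D {j} s)"
  define B where "B = D S (real (card S) * u)"
  have B_card: "0 < real (card S)" using S finite_subset[OF S(1)] by (simp add: card_gt_0_iff)
  have R_sets: "R \<in> sets M" and B_sets: "B \<in> sets M"
    using D(1) S s u B_card by (auto simp: R_def B_def)
  have "measure M R \<le> (\<Sum>j\<in>{1..m}. measure M (D {j} s))"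
    unfolding R_def using D(1) s by (intro finite_measure_subadditive_finite) auto
  also have "\<dots> \<le> (\<Sum>j\<in>{1..m}. 2 * exp (- real n * s\<^sup>2 / 2))"
  proof (rule sum_mono)
    fix j assume "j \<in> {1..m}"
    then show "measure M (D {j} s) \<le> 2 * exp (- real n * s\<^sup>2 / 2)"
      using D(2)[of "{j}" s] s by simp
  qed
  finally have R_prob: "measure M R \<le> 2 * real m * exp (- real n * s\<^sup>2 / 2)" by simp
  have B_prob: "measure M B \<le> 2 * exp (- real n * real (card S) * u\<^sup>2 / 2)"
    using D(2)[OF S, of "real (card S) * u"] u B_card
    by (simp add: B_def power_mult_distrib power2_eq_square mult_ac)
  define A where "A = space M - (R \<union> B)"
  have "measure M A = 1 - measure M (R \<union> B)"
    unfolding A_def using R_sets B_sets by (simp add: prob_compl)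
  moreover have "measure M (R \<union> B) \<le> measure M R + measure M B"
    using R_sets B_sets by (rule measure_Un_le)
  moreover have "A \<in> sets M" using R_sets B_sets by (simp add: A_def)
  moreover have "\<forall>x\<in>A. (\<forall>j\<in>{1..m}. \<bar>sample_mean n x j - \<theta> j\<bar> < s) \<and>
      \<bar>\<Sum>j\<in>S. sample_mean n x j - \<theta> j\<bar> < real (card S) * u"
    by (auto simp: A_def R_def B_def D_def not_le)
  ultimately show ?thesis
    using R_prob B_prob by (intro bexI[of _ A]) auto
qed

section \<open>Structure of the minimizers\<close>

lemma loss_fj_eq_sample_mean:
  assumes "n \<ge> 1"
  shows "loss_fj n x j a = loss_fj n x j (sample_mean n x j) + (a - sample_mean n x j)\<^sup>2 / 2"
proof -
  let ?y = "sample_mean n x j"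
  have centred: "(\<Sum>i=1..n. x (j,i) - ?y) = 0"
    using assms by (simp add: sum_subtractf sample_mean_def)
  have "(\<Sum>i=1..n. (x (j,i) - a)\<^sup>2)
      = (\<Sum>i=1..n. (x (j,i) - ?y)\<^sup>2 + 2 * (?y - a) * (x (j,i) - ?y) + (a - ?y)\<^sup>2)"
    by (intro sum.cong) (simp_all add: power2_eq_square algebra_simps)
  also have "\<dots> = (\<Sum>i=1..n. (x (j,i) - ?y)\<^sup>2) + 2 * (?y - a) * (\<Sum>i=1..n. x (j,i) - ?y)
      + real n * (a - ?y)\<^sup>2"
    by (simp add: sum.distrib sum_distrib_left)
  also have "\<dots> = (\<Sum>i=1..n. (x (j,i) - ?y)\<^sup>2) + real n * (a - ?y)\<^sup>2"
    unfolding centred by simp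
  finally show ?thesis
    using assms by (simp add: loss_fj_def field_simps)
qed

(* y - clamp lam (y - th) minimizes b \<mapsto> (b - y)\<^sup>2 / 2 + lam * \<bar>b - th\<bar>: it is y soft-thresholded
   towards th. *)
definition clamp :: "real \<Rightarrow> real \<Rightarrow> real" where
  "clamp lam z = max (- lam) (min lam z)"

lemma prox_abs_quadratic_growth:
  fixes lam y th b :: real
  assumes "lam \<ge> 0"
  defines "p \<equiv> y - clamp lam (y - th)"
  shows "(p - y)\<^sup>2 / 2 + lam * \<bar>p - th\<bar> + (b - p)\<^sup>2 / 2 \<le> (b - y)\<^sup>2 / 2 + lam * \<bar>b - th\<bar>"
proof -
  consider "\<bar>y - th\<bar> \<le> lam" | "y - th > lam" | "y - th < - lam" by linarith
  then show ?thesis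
  proof cases
    case 1
    then have "p = th" by (auto simp: p_def clamp_def)
    have "\<bar>b - th\<bar> * \<bar>th - y\<bar> \<le> \<bar>b - th\<bar> * lam"
      using 1 by (intro mult_left_mono) (simp_all add: abs_minus_commute)
    then have "- ((b - th) * (th - y)) \<le> lam * \<bar>b - th\<bar>"
      by (intro abs_le_D2) (simp add: abs_mult mult.commute)
    moreover have "(b - y)\<^sup>2 = (b - th)\<^sup>2 + 2 * ((b - th) * (th - y)) + (th - y)\<^sup>2"
      by (simp add: power2_eq_square algebra_simps)
    ultimately have "(th - y)\<^sup>2 / 2 + (b - th)\<^sup>2 / 2 \<le> (b - y)\<^sup>2 / 2 + lam * \<bar>b - th\<bar>"
      by linarith
    then show ?thesis by (simp add: \<open>p = th\<close>)
  next
    case 2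
    then have "p = y - lam" using assms(1) by (auto simp: p_def clamp_def)
    have "(p - y)\<^sup>2 / 2 + lam * \<bar>p - th\<bar> + (b - p)\<^sup>2 / 2 = (b - y)\<^sup>2 / 2 + lam * (b - th)"
      using 2 assms(1) by (simp add: \<open>p = y - lam\<close> abs_of_pos power2_eq_square field_simps)
    moreover have "lam * (b - th) \<le> lam * \<bar>b - th\<bar>"
      using assms(1) by (simp add: mult_left_mono)
    ultimately show ?thesis by linarith
  next
    case 3
    then have "p = y + lam" using assms(1) by (auto simp: p_def clamp_def)
    have "(p - y)\<^sup>2 / 2 + lam * \<bar>p - th\<bar> + (b - p)\<^sup>2 / 2 = (b - y)\<^sup>2 / 2 + lam * (th - b)"
      using 3 assms(1) by (simp add: \<open>p = y + lam\<close> abs_of_neg power2_eq_square field_simps)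
    moreover have "lam * (th - b) \<le> lam * \<bar>b - th\<bar>"
      using assms(1) by (simp add: mult_left_mono)
    ultimately show ?thesis by linarith
  qed
qed

lemma prox_abs_unique:
  assumes "lam \<ge> 0"
    and min: "\<And>b. (a - y)\<^sup>2 / 2 + lam * \<bar>a - th\<bar> \<le> (b - y)\<^sup>2 / 2 + lam * \<bar>b - th\<bar>"
  shows "a = y - clamp lam (y - th)"
proof -
  define p where "p = y - clamp lam (y - th)"
  have "(p - y)\<^sup>2 / 2 + lam * \<bar>p - th\<bar> + (a - p)\<^sup>2 / 2 \<le> (a - y)\<^sup>2 / 2 + lam * \<bar>a - th\<bar>"
    unfolding p_def by (rule prox_abs_quadratic_growth[OF assms(1)])
  with min[of p] have "(a - p)\<^sup>2 \<le> 0" by linarith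
  then show ?thesis by (simp add: p_def)
qed

lemma linear_coeff_nonneg_if_nonneg_on_pos:
  fixes B k :: real
  assumes "\<And>h. h > 0 \<Longrightarrow> 0 \<le> h * B + h\<^sup>2 * k"
  shows "0 \<le> B"
proof (rule field_le_epsilon)
  fix e :: real assume "e > 0"
  define h where "h = e / (\<bar>k\<bar> + 1)"
  have h: "h > 0" using \<open>e > 0\<close> by (simp add: h_def add_nonneg_pos)
  have "0 \<le> h * (B + h * k)"
    using assms[OF h] by (simp add: power2_eq_square algebra_simps)
  then have "0 \<le> B + h * k" using h by (simp add: zero_le_mult_iff)
  moreover have "h * k \<le> e"
  proof -
    have "h * k \<le> h * \<bar>k\<bar>" using h by (simp add: mult_left_mono)
    also have "\<dots> \<le> e" using \<open>e > 0\<close> by (simp add: h_def field_simps)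
    finally show ?thesis .
  qed
  ultimately show "0 \<le> B + e" by linarith
qed

lemma minimizer_eq_prox:
  assumes mn: "is_minimizer m n lam x ths th" and n: "n \<ge> 1" and lam: "lam \<ge> 0"
    and j: "j \<in> {1..m}"
  shows "ths j = sample_mean n x j - clamp lam (sample_mean n x j - th)"
proof (rule prox_abs_unique[OF lam])
  fix b
  let ?y = "sample_mean n x j"
  define rest where "rest = (\<Sum>k\<in>{1..m} - {j}. loss_fj n x k (ths k) + lam * \<bar>ths k - th\<bar>)"
  have "objective m n lam x ths th = loss_fj n x j (ths j) + lam * \<bar>ths j - th\<bar> + rest"
    using j by (simp add: objective_def rest_def sum.remove)
  moreover have "objective m n lam x (ths(j := b)) th = loss_fj n x j b + lam * \<bar>b - th\<bar> + rest"
    using j by (simp add: objective_def rest_def sum.remove)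
  moreover have "objective m n lam x ths th \<le> objective m n lam x (ths(j := b)) th"
    using mn by (simp add: is_minimizer_def)
  ultimately show "(ths j - ?y)\<^sup>2 / 2 + lam * \<bar>ths j - th\<bar> \<le> (b - ?y)\<^sup>2 / 2 + lam * \<bar>b - th\<bar>"
    using loss_fj_eq_sample_mean[OF n, of x j b] loss_fj_eq_sample_mean[OF n, of x j "ths j"]
    by (simp add: algebra_simps)
qed

(* Shift th and all inlier coordinates by h: the inlier penalties do not change and each outlier
   penalty grows by at most lam * |h|. *)
lemma minimizer_shift_inequality:
  assumes mn: "is_minimizer m n lam x ths th" and n: "n \<ge> 1" and lam: "lam \<ge> 0"
    and S: "S \<subseteq> {1..m}"
  shows "0 \<le> h * (\<Sum>j\<in>S. ths j - sample_mean n x j) + h\<^sup>2 * (real (card S) / 2)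
           + \<bar>h\<bar> * (lam * real (card ({1..m} - S)))"
proof -
  define g where "g ths' th' k = loss_fj n x k (ths' k) + lam * \<bar>ths' k - th'\<bar>" for ths' th' k
  define ths' where "ths' k = (if k \<in> S then ths k + h else ths k)" for k
  define D where "D k = g ths' (th + h) k - g ths th k" for k
  have inlier: "D k = h * (ths k - sample_mean n x k) + h\<^sup>2 / 2" if "k \<in> S" for k
    using that loss_fj_eq_sample_mean[OF n, of x k "ths k + h"] loss_fj_eq_sample_mean[OF n, of x k "ths k"]
    by (simp add: D_def g_def ths'_def power2_eq_square field_simps)
  have outlier: "D k \<le> lam * \<bar>h\<bar>" if "k \<in> {1..m} - S" for k
  proof -
    have "lam * (\<bar>ths k - (th + h)\<bar> - \<bar>ths k - th\<bar>) \<le> lam * \<bar>h\<bar>"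
      using lam by (intro mult_left_mono) auto
    then show ?thesis using that by (simp add: D_def g_def ths'_def right_diff_distrib)
  qed
  have "0 \<le> objective m n lam x ths' (th + h) - objective m n lam x ths th"
    using mn by (simp add: is_minimizer_def)
  also have "\<dots> = (\<Sum>k=1..m. D k)"
    by (simp add: objective_def D_def g_def sum_subtractf)
  also have "\<dots> = (\<Sum>k\<in>{1..m} - S. D k) + (\<Sum>k\<in>S. D k)"
    using S by (simp add: sum.subset_diff)
  also have "(\<Sum>k\<in>S. D k) = h * (\<Sum>j\<in>S. ths j - sample_mean n x j) + h\<^sup>2 * (real (card S) / 2)"
    by (simp add: inlier sum.distrib sum_distrib_left)
  also have "(\<Sum>k\<in>{1..m} - S. D k) \<le> \<bar>h\<bar> * (lam * real (card ({1..m} - S)))"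
    using sum_mono[of "{1..m} - S" D "\<lambda>_. lam * \<bar>h\<bar>", OF outlier] by (simp add: mult_ac)
  finally show ?thesis by linarith
qed

lemma minimizer_inlier_residual_sum:
  assumes mn: "is_minimizer m n lam x ths th" and n: "n \<ge> 1" and lam: "lam \<ge> 0"
    and S: "S \<subseteq> {1..m}"
  shows "\<bar>\<Sum>j\<in>S. ths j - sample_mean n x j\<bar> \<le> lam * real (card ({1..m} - S))"
proof -
  define A where "A = (\<Sum>j\<in>S. ths j - sample_mean n x j)"
  define p where "p = real (card S)"
  define q where "q = real (card ({1..m} - S))"
  note shifted = minimizer_shift_inequality[OF mn n lam S, folded A_def p_def q_def]
  have "0 \<le> A + lam * q"
  proof (rule linear_coeff_nonneg_if_nonneg_on_pos)
    fix h :: real assume "h > 0"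
    then show "0 \<le> h * (A + lam * q) + h\<^sup>2 * (p / 2)"
      using shifted[of h] by (simp add: algebra_simps)
  qed
  moreover have "0 \<le> lam * q - A"
  proof (rule linear_coeff_nonneg_if_nonneg_on_pos)
    fix h :: real assume "h > 0"
    then show "0 \<le> h * (lam * q - A) + h\<^sup>2 * (p / 2)"
      using shifted[of "- h"] by (simp add: algebra_simps)
  qed
  ultimately show ?thesis by (simp add: A_def q_def abs_le_iff)
qed

(* If th were farther than d + rho from c, all the residuals ths j - y j would have the same sign
   and modulus greater than rho. *)
lemma center_near_inliers:
  fixes y ths :: "nat \<Rightarrow> real"
  assumes S: "finite S" "S \<noteq> {}" and \<rho>: "0 \<le> \<rho>" "\<rho> < lam"
    and prox: "\<forall>j\<in>S. ths j = y j - clamp lam (y j - th)"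
    and resid: "\<bar>\<Sum>j\<in>S. ths j - y j\<bar> \<le> real (card S) * \<rho>"
    and near: "\<forall>j\<in>S. \<bar>y j - c\<bar> \<le> d"
  shows "\<bar>th - c\<bar> \<le> d + \<rho>"
proof (rule ccontr)
  assume far: "\<not> ?thesis"
  have "(\<forall>j\<in>S. \<rho> < ths j - y j) \<or> (\<forall>j\<in>S. ths j - y j < - \<rho>)"
  proof (cases "c < th")
    case True
    then have "\<forall>j\<in>S. y j - th < - \<rho>" using far near by (auto simp: abs_le_iff)
    then show ?thesis using prox \<rho> by (auto simp: clamp_def)
  next
    case False
    then have "\<forall>j\<in>S. \<rho> < y j - th" using far near by (auto simp: abs_le_iff)
    then show ?thesis using prox \<rho> by (auto simp: clamp_def)
  qed
  then have "real (card S) * \<rho> < \<bar>\<Sum>j\<in>S. ths j - y j\<bar>"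
  proof
    assume "\<forall>j\<in>S. \<rho> < ths j - y j"
    then have "(\<Sum>j\<in>S. \<rho>) < (\<Sum>j\<in>S. ths j - y j)" using S by (intro sum_strict_mono) auto
    then show ?thesis by simp
  next
    assume "\<forall>j\<in>S. ths j - y j < - \<rho>"
    then have "(\<Sum>j\<in>S. ths j - y j) < (\<Sum>j\<in>S. - \<rho>)" using S by (intro sum_strict_mono) auto
    then show ?thesis by simp
  qed
  then show False using resid by linarith
qed

lemma average_error_bound:
  fixes y tst :: "nat \<Rightarrow> real"
  assumes S: "finite S" "S \<noteq> {}"
    and resid: "\<bar>\<Sum>k\<in>S. th - y k\<bar> \<le> real (card S) * \<rho>"
    and avg_noise: "\<bar>\<Sum>k\<in>S. y k - tst k\<bar> \<le> real (card S) * u"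
    and spread: "\<forall>k\<in>S. \<bar>tst k - c\<bar> \<le> \<delta>"
    and j: "j \<in> S"
  shows "\<bar>th - tst j\<bar> \<le> \<rho> + u + 2 * \<delta>"
proof -
  define p where "p = real (card S)"
  have p: "p > 0" using S by (simp add: p_def card_gt_0_iff)
  have "\<bar>\<Sum>k\<in>S. tst k - tst j\<bar> \<le> (\<Sum>k\<in>S. \<bar>tst k - tst j\<bar>)" by (rule sum_abs)
  also have "\<dots> \<le> (\<Sum>k\<in>S. 2 * \<delta>)"
  proof (rule sum_mono)
    fix k assume "k \<in> S"
    with spread j have "\<bar>tst k - c\<bar> \<le> \<delta>" "\<bar>tst j - c\<bar> \<le> \<delta>" by auto
    then show "\<bar>tst k - tst j\<bar> \<le> 2 * \<delta>" by arith
  qed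
  finally have "\<bar>(\<Sum>k\<in>S. tst k) - p * tst j\<bar> \<le> p * (2 * \<delta>)"
    by (simp add: p_def sum_subtractf)
  moreover have "\<bar>p * th - (\<Sum>k\<in>S. y k)\<bar> \<le> p * \<rho>"
    using resid by (simp add: p_def sum_subtractf)
  moreover have "\<bar>(\<Sum>k\<in>S. y k) - (\<Sum>k\<in>S. tst k)\<bar> \<le> p * u"
    using avg_noise by (simp add: p_def sum_subtractf)
  ultimately have "\<bar>p * th - p * tst j\<bar> \<le> p * \<rho> + p * u + p * (2 * \<delta>)"
    by arith
  then have "p * \<bar>th - tst j\<bar> \<le> p * (\<rho> + u + 2 * \<delta>)"
    using p by (simp add: abs_mult right_diff_distrib[symmetric] distrib_left)
  then show ?thesis using p by simp
qed

lemma inlier_estimates_error_bound: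
  fixes y ths tst :: "nat \<Rightarrow> real"
  assumes S: "finite S" "S \<noteq> {}" and \<rho>: "0 \<le> \<rho>" "\<rho> < lam"
    and prox: "\<forall>j\<in>S. ths j = y j - clamp lam (y j - th)"
    and resid: "\<bar>\<Sum>j\<in>S. ths j - y j\<bar> \<le> real (card S) * \<rho>"
    and noise: "\<forall>j\<in>S. \<bar>y j - tst j\<bar> \<le> s"
    and avg_noise: "\<bar>\<Sum>j\<in>S. y j - tst j\<bar> \<le> real (card S) * u"
    and spread: "\<forall>j\<in>S. \<bar>tst j - c\<bar> \<le> \<delta>"
    and margin: "2 * \<delta> + 2 * s + \<rho> \<le> lam"
  shows "\<forall>j\<in>S. \<bar>ths j - tst j\<bar> \<le> \<rho> + u + 2 * \<delta>"
proof -
  have near: "\<forall>k\<in>S. \<bar>y k - c\<bar> \<le> \<delta> + s"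
  proof
    fix k assume "k \<in> S"
    with noise spread have "\<bar>y k - tst k\<bar> \<le> s" "\<bar>tst k - c\<bar> \<le> \<delta>" by auto
    then show "\<bar>y k - c\<bar> \<le> \<delta> + s" by arith
  qed
  have center: "\<bar>th - c\<bar> \<le> \<delta> + s + \<rho>"
    by (rule center_near_inliers[OF S \<rho> prox resid near])
  have all_center: "ths k = th" if "k \<in> S" for k
  proof -
    have "\<bar>y k - c\<bar> \<le> \<delta> + s" using near that by blast
    then have "\<bar>y k - th\<bar> \<le> lam" using center margin by arith
    then show ?thesis using prox that by (auto simp: clamp_def)
  qed
  have "\<bar>\<Sum>k\<in>S. th - y k\<bar> \<le> real (card S) * \<rho>"
    using resid all_center by simp
  then show ?thesis
    using average_error_bound[OF S _ avg_noise spread] all_center by simp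
qed

lemma minimizer_error_bounds:
  fixes tst :: "nat \<Rightarrow> real"
  assumes mn: "is_minimizer m n lam x ths th" and n: "n \<ge> 1" and lam: "lam > 0"
    and S: "S \<subseteq> {1..m}" and majority: "card ({1..m} - S) < card S"
    and noise: "\<forall>j\<in>{1..m}. \<bar>sample_mean n x j - tst j\<bar> \<le> s"
    and avg_noise: "\<bar>\<Sum>j\<in>S. sample_mean n x j - tst j\<bar> \<le> real (card S) * u"
    and spread: "\<forall>j\<in>S. \<bar>tst j - c\<bar> \<le> \<delta>"
  defines "\<rho> \<equiv> lam * real (card ({1..m} - S)) / real (card S)"
  shows "\<forall>j\<in>{1..m}. \<bar>ths j - tst j\<bar> \<le> lam + s"
    and "2 * \<delta> + 2 * s + \<rho> \<le> lam \<Longrightarrow> \<forall>j\<in>S. \<bar>ths j - tst j\<bar> \<le> \<rho> + u + 2 * \<delta>"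
proof -
  have prox: "\<forall>j\<in>{1..m}. ths j = sample_mean n x j - clamp lam (sample_mean n x j - th)"
    using minimizer_eq_prox[OF mn n] lam by simp
  show "\<forall>j\<in>{1..m}. \<bar>ths j - tst j\<bar> \<le> lam + s"
  proof
    fix j assume j: "j \<in> {1..m}"
    have "\<bar>ths j - sample_mean n x j\<bar> \<le> lam" using prox j lam by (auto simp: clamp_def)
    with noise j show "\<bar>ths j - tst j\<bar> \<le> lam + s" by fastforce
  qed
  assume margin: "2 * \<delta> + 2 * s + \<rho> \<le> lam"
  have finS: "finite S" using S finite_subset by blast
  have p: "real (card S) > 0" using majority by simp
  have \<rho>: "0 \<le> \<rho>" "\<rho> < lam"
    using lam p majority by (simp_all add: \<rho>_def divide_less_eq)
  have resid: "\<bar>\<Sum>j\<in>S. ths j - sample_mean n x j\<bar> \<le> real (card S) * \<rho>"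
    using minimizer_inlier_residual_sum[OF mn n _ S] lam p by (simp add: \<rho>_def)
  show "\<forall>j\<in>S. \<bar>ths j - tst j\<bar> \<le> \<rho> + u + 2 * \<delta>"
    using S p by (intro inlier_estimates_error_bound[OF finS _ \<rho> _ resid _ avg_noise spread margin])
      (use prox noise in auto)
qed

section \<open>Rates\<close>

lemma inlier_majority:
  assumes S: "S \<subseteq> {1..m}" and m: "m \<ge> 1"
    and frac: "real (card ({1..m} - S)) / real m \<le> \<epsilon>" and \<epsilon>: "\<epsilon> < 1/2"
  shows "card ({1..m} - S) < card S"
    and "real m \<le> 2 * real (card S)"
    and "real (card ({1..m} - S)) \<le> 2 * \<epsilon> * real (card S)"
proof -
  define p where "p = real (card S)"
  define q where "q = real (card ({1..m} - S))"
  have finS: "finite S" using S finite_subset by blast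
  have pq: "p + q = real m"
    using card_Diff_subset[OF finS S] card_mono[OF _ S] by (simp add: p_def q_def of_nat_diff)
  have "q \<le> \<epsilon> * real m" using frac m by (simp add: q_def divide_le_eq)
  moreover have "\<epsilon> * real m < real m / 2" using \<epsilon> m by simp
  ultimately have "q < p" and m2p: "real m \<le> 2 * p" using pq by linarith+
  moreover have "\<epsilon> \<ge> 0"
    using frac order_trans[OF divide_nonneg_nonneg[of "real (card ({1..m} - S))" "real m"]] by simp
  ultimately have "q \<le> 2 * \<epsilon> * p"
    using \<open>q \<le> \<epsilon> * real m\<close> mult_left_mono[OF m2p, of \<epsilon>] by simp
  then show "card ({1..m} - S) < card S" "real m \<le> 2 * real (card S)"
    "real (card ({1..m} - S)) \<le> 2 * \<epsilon> * real (card S)"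
    using \<open>q < p\<close> m2p by (simp_all add: p_def q_def)
qed

lemma ln_4_less_2: "ln (4::real) < 2"
proof -
  have "ln (4::real) = 2 * ln 2" using ln_realpow[of 2 2] by simp
  then show ?thesis using ln_2_less_1 by simp
qed

lemma real_sqrt_le_mult_sqrt:
  fixes a k X :: real
  assumes "0 \<le> k" and "a \<le> k\<^sup>2 * X"
  shows "sqrt a \<le> k * sqrt X"
  using real_sqrt_le_mono[OF assms(2)] assms(1) by (simp add: real_sqrt_mult)

lemma sqrt_deviation_threshold_le:
  fixes L N :: real
  assumes "1 \<le> L" and "0 < N"
  shows "sqrt (2 * (L + ln 4) / N) \<le> 5/2 * sqrt (L / N)"
proof (rule real_sqrt_le_mult_sqrt)
  show "2 * (L + ln 4) / N \<le> (5/2)\<^sup>2 * (L / N)"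
    using assms ln_4_less_2 by (simp add: field_simps)
qed simp

lemma sqrt_average_threshold_le:
  fixes t N M p :: real
  assumes "1 \<le> t" and "0 < N" and "0 < M" and "M \<le> 2 * p"
  shows "sqrt (2 * (t + ln 4) / (N * p)) \<le> 4 * sqrt (t / (M * N))"
proof (rule real_sqrt_le_mult_sqrt)
  have ln4: "0 < ln (4::real)" "ln (4::real) < 2" using ln_4_less_2 by simp_all
  have "2 * (t + ln 4) / (N * p) \<le> 2 * (t + ln 4) / (N * M / 2)"
    using assms ln4 by (intro divide_left_mono) simp_all
  also have "\<dots> \<le> 4\<^sup>2 * (t / (M * N))"
    using assms ln4 by (simp add: field_simps)
  finally show "2 * (t + ln 4) / (N * p) \<le> 4\<^sup>2 * (t / (M * N))" .
qed simp

lemma union_bound_budget_eq: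
  fixes t :: real
  assumes "real m > 0"
  shows "2 * real m * exp (- (ln (real m) + ln 4 + t)) + 2 * exp (- (ln 4 + t)) = exp (- t)"
  using assms by (simp only: exp_minus exp_add) (simp add: field_simps)

lemma data_measure_sample_means_rates:
  fixes \<theta> :: "nat \<Rightarrow> real" and t :: real
  assumes n: "n \<ge> 1" and m: "m \<ge> 1" and t: "t \<ge> 1"
    and S: "S \<subseteq> {1..m}" and majority: "real m \<le> 2 * real (card S)"
  defines "M \<equiv> data_measure m n \<theta>"
    and "r \<equiv> sqrt ((ln (real m) + t) / real n)" and "w \<equiv> sqrt (t / (real m * real n))"
  shows "\<exists>A\<in>sets M. 1 - exp (- t) \<le> measure M A \<and>
           (\<forall>x\<in>A. (\<forall>j\<in>{1..m}. \<bar>sample_mean n x j - \<theta> j\<bar> \<le> 5/2 * r) \<and>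
                   \<bar>\<Sum>j\<in>S. sample_mean n x j - \<theta> j\<bar> \<le> real (card S) * (4 * w))"
proof -
  define L where "L = ln (real m) + t"
  define p where "p = real (card S)"
  \<comment> \<open>s and u make each of the two failure probabilities equal to exp (- t) / 2\<close>
  define s where "s = sqrt (2 * (L + ln 4) / real n)"
  define u where "u = sqrt (2 * (t + ln 4) / (real n * p))"
  have n0: "real n > 0" and m0: "real m > 0" and p0: "p > 0"
    using n m majority by (auto simp: p_def)
  have "0 \<le> ln (real m)" using m by simp
  then have L: "1 \<le> L" using t by (simp add: L_def)
  have ln4: "0 < ln (4::real)" by simp
  have "0 < L + ln 4" using L ln4 by linarith
  moreover have "0 < t + ln 4" using t ln4 by linarith
  ultimately have s0: "s > 0" and u0: "u > 0" using n0 p0 by (simp_all add: s_def u_def)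
  have s_exp: "- real n * s\<^sup>2 / 2 = - (ln (real m) + ln 4 + t)"
    using n0 \<open>0 < L + ln 4\<close> by (simp add: s_def L_def)
  have u_exp: "- real n * p * u\<^sup>2 / 2 = - (ln 4 + t)"
    using n0 p0 \<open>0 < t + ln 4\<close> by (simp add: u_def)
  have s_le: "s \<le> 5/2 * r"
    using sqrt_deviation_threshold_le[OF L n0] unfolding s_def r_def L_def .
  have pu_le: "p * u \<le> p * (4 * w)"
    using sqrt_average_threshold_le[OF t n0 m0 majority[folded p_def]] p0
    unfolding u_def w_def by simp
  obtain A where A: "A \<in> sets M"
    and A_prob: "1 - (2 * real m * exp (- real n * s\<^sup>2 / 2) + 2 * exp (- real n * p * u\<^sup>2 / 2))
                   \<le> measure M A"
    and A_good: "\<forall>x\<in>A. (\<forall>j\<in>{1..m}. \<bar>sample_mean n x j - \<theta> j\<bar> < s) \<and>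
                        \<bar>\<Sum>j\<in>S. sample_mean n x j - \<theta> j\<bar> < p * u"
    using data_measure_sample_means_concentrate[OF n S _ s0 u0, of \<theta>] p0
    unfolding M_def p_def by fastforce
  have "1 - exp (- t) \<le> measure M A"
    using A_prob union_bound_budget_eq[OF m0, of t] unfolding s_exp u_exp by simp
  moreover have "\<forall>x\<in>A. (\<forall>j\<in>{1..m}. \<bar>sample_mean n x j - \<theta> j\<bar> \<le> 5/2 * r) \<and>
      \<bar>\<Sum>j\<in>S. sample_mean n x j - \<theta> j\<bar> \<le> p * (4 * w)"
    using A_good s_le pu_le by (meson less_imp_le order.strict_trans2)
  ultimately show ?thesis
    using A unfolding p_def by blast
qed

lemma tuning_parameter_bounds:
  fixes c r :: real
  assumes c: "0 \<le> c" "c < 1/2" and r: "r > 0"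
  defines "lam \<equiv> 5 / (1 - 2 * c) * (sqrt 2 * r)"
  shows "0 < lam" and "lam \<le> 15/2 * (r / (1 - 2 * c))" and "7 * r \<le> lam - 2 * (c * lam)"
proof -
  have sqrt2: "7/5 \<le> sqrt (2::real)" "sqrt (2::real) \<le> 3/2"
    by (rule real_le_rsqrt, simp add: power2_eq_square)
      (rule real_le_lsqrt, simp_all add: power2_eq_square)
  show "0 < lam" using c r by (simp add: lam_def)
  have "lam = 5 * (sqrt 2 * r) / (1 - 2 * c)" by (simp add: lam_def)
  also have "\<dots> \<le> 5 * (3/2 * r) / (1 - 2 * c)"
    using mult_right_mono[OF sqrt2(2), of r] r c by (intro divide_right_mono) simp_all
  also have "\<dots> = 15/2 * (r / (1 - 2 * c))" by simp
  finally show "lam \<le> 15/2 * (r / (1 - 2 * c))" .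
  have "7 * r \<le> 5 * (sqrt 2 * r)" using mult_left_mono[OF sqrt2(1), of r] r by simp
  moreover have "lam - 2 * (c * lam) = lam * (1 - 2 * c)" by (simp add: algebra_simps)
  moreover have "lam * (1 - 2 * c) = 5 * (sqrt 2 * r)" using c by (simp add: lam_def)
  ultimately show "7 * r \<le> lam - 2 * (c * lam)" by linarith
qed

context
  fixes m n :: nat and x :: "nat \<times> nat \<Rightarrow> real" and ths tst :: "nat \<Rightarrow> real"
    and S :: "nat set" and lam th \<epsilon> c \<delta> r w c0 :: real
  assumes mn: "is_minimizer m n lam x ths th" and n: "n \<ge> 1"
    and S: "S \<subseteq> {1..m}" and majority: "card ({1..m} - S) < card S"
    and outliers: "real (card ({1..m} - S)) \<le> 2 * \<epsilon> * real (card S)"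
    and \<epsilon>: "0 \<le> \<epsilon>" "\<epsilon> \<le> c" "c < 1/2" and \<delta>: "0 \<le> \<delta>" and r: "r > 0" and w: "w > 0"
    and lam: "lam = 5 / (1 - 2 * c) * (sqrt 2 * r)"
    and noise: "\<forall>j\<in>{1..m}. \<bar>sample_mean n x j - tst j\<bar> \<le> 5/2 * r"
    and avg_noise: "\<bar>\<Sum>j\<in>S. sample_mean n x j - tst j\<bar> \<le> real (card S) * (4 * w)"
    and spread: "\<forall>j\<in>S. \<bar>tst j - c0\<bar> \<le> \<delta>"
begin

lemma minimizer_error_rates_explicit:
  defines "K \<equiv> 1 / (1 - 2 * c)"
  shows "\<forall>j\<in>{1..m}. \<bar>ths j - tst j\<bar> \<le> 15/2 * (K * r) + 5/2 * r"
    and "\<delta> \<le> r \<Longrightarrow> \<forall>j\<in>S. \<bar>ths j - tst j\<bar> \<le> 15 * (\<epsilon> * (K * r)) + 4 * w + 2 * \<delta>"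
proof -
  define \<rho> where "\<rho> = lam * real (card ({1..m} - S)) / real (card S)"
  have lam_pos: "0 < lam" and lam_le: "lam \<le> 15/2 * (K * r)"
    and lam_margin: "7 * r \<le> lam - 2 * (c * lam)"
    using tuning_parameter_bounds[of c r] \<epsilon> r unfolding lam by (simp_all add: K_def)
  have \<rho>_le: "\<rho> \<le> 2 * (\<epsilon> * lam)"
  proof -
    have p: "0 < real (card S)" using majority by simp
    have "lam * real (card ({1..m} - S)) \<le> lam * (2 * \<epsilon> * real (card S))"
      using outliers lam_pos by (intro mult_left_mono) simp_all
    then show ?thesis by (simp add: \<rho>_def pos_divide_le_eq[OF p] mult_ac)
  qed
  note bounds = minimizer_error_bounds[OF mn n lam_pos S majority noise avg_noise spread,
      folded \<rho>_def]
  show "\<forall>j\<in>{1..m}. \<bar>ths j - tst j\<bar> \<le> 15/2 * (K * r) + 5/2 * r"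
    using bounds(1) lam_le by fastforce
  assume "\<delta> \<le> r"
  have "\<epsilon> * lam \<le> c * lam" using \<epsilon> lam_pos by (simp add: mult_right_mono)
  then have "2 * \<delta> + 2 * (5/2 * r) + \<rho> \<le> lam" using \<open>\<delta> \<le> r\<close> \<rho>_le lam_margin by linarith
  moreover have "\<rho> \<le> 15 * (\<epsilon> * (K * r))"
    using \<rho>_le mult_left_mono[OF lam_le \<epsilon>(1)] by simp
  ultimately show "\<forall>j\<in>S. \<bar>ths j - tst j\<bar> \<le> 15 * (\<epsilon> * (K * r)) + 4 * w + 2 * \<delta>"
    using bounds(2) by fastforce
qed

lemma minimizer_error_rates:
  shows "\<forall>j\<in>S. \<bar>ths j - tst j\<bar> < 20 / (1 - 2 * c)\<^sup>2 * (w + min \<delta> r + \<epsilon> * r)"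
    and "\<forall>j\<in>{1..m} - S. \<bar>ths j - tst j\<bar> < 20 / (1 - 2 * c)\<^sup>2 * r"
proof -
  define K where "K = 1 / (1 - 2 * c)"
  note explicit = minimizer_error_rates_explicit[folded K_def]
  have K1: "1 \<le> K" using \<epsilon> by (simp add: K_def)
  have K_sq: "K \<le> K\<^sup>2" using mult_left_mono[OF K1, of K] K1 by (simp add: power2_eq_square)
  then have K_sq1: "1 \<le> K\<^sup>2" using K1 by linarith
  have scale: "r \<le> K\<^sup>2 * r" "K * r \<le> K\<^sup>2 * r" "w \<le> K\<^sup>2 * w" "\<delta> \<le> K\<^sup>2 * \<delta>"
    "\<epsilon> * (K * r) \<le> \<epsilon> * (K\<^sup>2 * r)"
    using mult_right_mono[OF K_sq1, of r] mult_right_mono[OF K_sq, of r] mult_right_mono[OF K_sq1, of w]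
      mult_right_mono[OF K_sq1, of \<delta>] mult_left_mono[OF mult_right_mono[OF K_sq, of r] \<epsilon>(1)] r w \<delta>
    by simp_all
  have Kr: "0 < K\<^sup>2 * r" using scale(1) r by linarith
  have Kw: "0 < K\<^sup>2 * w" using scale(3) w by linarith
  have Ker: "0 \<le> \<epsilon> * (K\<^sup>2 * r)" using \<epsilon>(1) Kr by simp
  have crude: "\<bar>ths j - tst j\<bar> \<le> 10 * (K\<^sup>2 * r)" if "j \<in> {1..m}" for j
    using explicit(1) that scale by fastforce
  have C: "20 / (1 - 2 * c)\<^sup>2 * X = 20 * (K\<^sup>2 * X)" for X
    by (simp add: K_def power_divide)
  show "\<forall>j\<in>{1..m} - S. \<bar>ths j - tst j\<bar> < 20 / (1 - 2 * c)\<^sup>2 * r"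
    unfolding C using crude Kr by fastforce
  have split: "20 / (1 - 2 * c)\<^sup>2 * (w + d + \<epsilon> * r)
      = 20 * (K\<^sup>2 * w) + 20 * (K\<^sup>2 * d) + 20 * (\<epsilon> * (K\<^sup>2 * r))" for d
    unfolding C by (simp add: algebra_simps)
  show "\<forall>j\<in>S. \<bar>ths j - tst j\<bar> < 20 / (1 - 2 * c)\<^sup>2 * (w + min \<delta> r + \<epsilon> * r)"
  proof
    fix j assume j: "j \<in> S"
    show "\<bar>ths j - tst j\<bar> < 20 / (1 - 2 * c)\<^sup>2 * (w + min \<delta> r + \<epsilon> * r)"
    proof (cases "\<delta> \<le> r")
      case True
      have "\<bar>ths j - tst j\<bar> \<le> 15 * (\<epsilon> * (K * r)) + 4 * w + 2 * \<delta>"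
        using explicit(2)[OF True] j by blast
      then show ?thesis
        using scale Kw Ker \<delta> unfolding split min_absorb1[OF True] by linarith
    next
      case False
      have "\<bar>ths j - tst j\<bar> \<le> 10 * (K\<^sup>2 * r)" using crude j S by blast
      then show ?thesis
        using False Kr Kw Ker unfolding split by (simp add: min_absorb2)
    qed
  qed
qed

end

lemma error_bounds_with_high_probability:
  fixes \<theta> :: "nat \<Rightarrow> real" and \<epsilon> \<delta> t c lam :: real
  assumes m: "2 \<le> m" and n: "1 \<le> n" and \<epsilon>: "0 \<le> \<epsilon>" "\<epsilon> < 1/2" and \<delta>: "0 \<le> \<delta>"
    and S: "S \<subseteq> {1..m}" and frac: "real (card ({1..m} - S)) / real m \<le> \<epsilon>"
    and spread: "\<exists>th0::real. \<forall>j\<in>S. \<bar>\<theta> j - th0\<bar> \<le> \<delta>"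
    and t: "1 \<le> t" and c: "\<epsilon> \<le> c" "c < 1/2"
    and lam: "lam = 5 / (1 - 2*c) * sqrt (2 * (ln (real m) + t) / real n)"
  shows "\<exists>A \<in> sets (data_measure m n \<theta>).
       measure (data_measure m n \<theta>) A \<ge> 1 - exp (- t) \<and>
       (\<forall>x\<in>A. \<forall>ths th. is_minimizer m n lam x ths th \<longrightarrow>
          (\<forall>j\<in>S. \<bar>ths j - \<theta> j\<bar> <
             20 / (1 - 2*c)\<^sup>2 * (sqrt (t / (real m * real n))
               + min \<delta> (sqrt ((ln (real m) + t) / real n))
               + \<epsilon> * sqrt ((ln (real m) + t) / real n))) \<and>
          (\<forall>j\<in>{1..m} - S. \<bar>ths j - \<theta> j\<bar> <
             20 / (1 - 2*c)\<^sup>2 * sqrt ((ln (real m) + t) / real n)))"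
proof -
  obtain c0 where c0: "\<forall>j\<in>S. \<bar>\<theta> j - c0\<bar> \<le> \<delta>" using spread by blast
  have m1: "m \<ge> 1" using m by simp
  note majority = inlier_majority[OF S m1 frac \<epsilon>(2)]
  define r where "r = sqrt ((ln (real m) + t) / real n)"
  define w where "w = sqrt (t / (real m * real n))"
  have "0 \<le> ln (real m)" using m1 by simp
  then have "0 < ln (real m) + t" using t by linarith
  then have r: "r > 0" and w: "w > 0" using m1 n t by (simp_all add: r_def w_def)
  have "2 * (ln (real m) + t) / real n = 2 * ((ln (real m) + t) / real n)" by simp
  then have lam_r: "lam = 5 / (1 - 2 * c) * (sqrt 2 * r)"
    unfolding lam r_def by (simp only: real_sqrt_mult)
  obtain A where A: "A \<in> sets (data_measure m n \<theta>)"
    and A_prob: "1 - exp (- t) \<le> measure (data_measure m n \<theta>) A"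
    and A_good: "\<forall>x\<in>A. (\<forall>j\<in>{1..m}. \<bar>sample_mean n x j - \<theta> j\<bar> \<le> 5/2 * r) \<and>
                   \<bar>\<Sum>j\<in>S. sample_mean n x j - \<theta> j\<bar> \<le> real (card S) * (4 * w)"
    using data_measure_sample_means_rates[OF n m1 t S majority(2), of \<theta>]
    unfolding r_def w_def by blast
  have "(\<forall>j\<in>S. \<bar>ths j - \<theta> j\<bar> < 20 / (1 - 2 * c)\<^sup>2 * (w + min \<delta> r + \<epsilon> * r)) \<and>
        (\<forall>j\<in>{1..m} - S. \<bar>ths j - \<theta> j\<bar> < 20 / (1 - 2 * c)\<^sup>2 * r)"
    if "x \<in> A" and "is_minimizer m n lam x ths th" for x ths th
    using minimizer_error_rates[OF that(2) n S majority(1) majority(3) \<epsilon>(1) c \<delta> r w lam_r _ _ c0]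
      A_good that(1) by blast
  then show ?thesis
    using A A_prob unfolding r_def w_def by blast
qed

theorem theorem2p2:
  shows "\<exists>C>0. \<forall>(m::nat) (n::nat) (\<epsilon>::real) (\<delta>::real) (theta_star::nat \<Rightarrow> real)
            (S::nat set) (t::real) (c::real) (lam::real).
    2 \<le> m \<longrightarrow> 1 \<le> n \<longrightarrow> 0 \<le> \<epsilon> \<longrightarrow> \<epsilon> < 1/2 \<longrightarrow> 0 \<le> \<delta> \<longrightarrow>
    S \<subseteq> {1..m} \<longrightarrow> real (card ({1..m} - S)) / real m \<le> \<epsilon> \<longrightarrow>
    (\<exists>th0::real. \<forall>j\<in>S. \<bar>theta_star j - th0\<bar> \<le> \<delta>) \<longrightarrow>
    1 \<le> t \<longrightarrow> \<epsilon> \<le> c \<longrightarrow> c < 1/2 \<longrightarrow>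
    lam = 5 / (1 - 2*c) * sqrt (2 * (ln (real m) + t) / real n) \<longrightarrow>
    (\<exists>A \<in> sets (data_measure m n theta_star).
       measure (data_measure m n theta_star) A \<ge> 1 - exp (- t) \<and>
       (\<forall>x\<in>A. \<forall>ths th. is_minimizer m n lam x ths th \<longrightarrow>
          (\<forall>j\<in>S. \<bar>ths j - theta_star j\<bar> <
             C / (1 - 2*c)\<^sup>2 * (sqrt (t / (real m * real n))
               + min \<delta> (sqrt ((ln (real m) + t) / real n))
               + \<epsilon> * sqrt ((ln (real m) + t) / real n))) \<and>
          (\<forall>j\<in>{1..m} - S. \<bar>ths j - theta_star j\<bar> <
             C / (1 - 2*c)\<^sup>2 * sqrt ((ln (real m) + t) / real n))))"
  by (rule exI[of _ "20::real"], intro conjI allI impI zero_less_numeral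
      error_bounds_with_high_probability)

end
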